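(* Assume the pair $(\mathcal D,\mathcal F)$ is good. Then for every $\varepsilon\in(0,1)$, $\mathrm{RiskA}(\varepsilon)\le\Phi_*(\ln(2/\varepsilon))$. More precisely, for every $\delta>0$ there exist $\phi\in\mathcal F$ and $c\in\mathbb R$ such that the affine estimate $\hat g=\phi+c$ satisfies $\mathrm{Risk}(\hat g;\varepsilon)\le\Phi_*(\ln(2/\varepsilon))+\delta$.
   Context: Let $(\Omega,P)$ be a Polish space equipped with a $\sigma$-finite Borel measure $P$, let $\mathcal M\subset\mathbb R^m$, and let $\mathcal D=\{p_\mu\}_{\mu\in\mathcal M}$ be a parametric density family: for each $\mu\in\mathcal M$, $p_\mu$ is a nonnegative Borel function on $\Omega$ with $\int_\Omega p_\mu\,dP=1$. Let $\mathcal F$ be a finite-dimensional linear space of Borel functions on $\Omega$ containing the constants. The pair $(\mathcal D,\mathcal F)$ is called good if: (1) $\mathcal M$ is an open convex subset of $\mathbb R^m$; (2) $p_\mu(\omega)>0$ for all $\mu\in\mathcal M$, $\omega\in\Omega$; (3) for all $\mu,\nu\in\mathcal M$ the function $\omega\mapsto\ln(p_\mu(\omega)/p_\nu(\omega))$ belongs to $\mathcal F$; (4) for every $\phi\in\mathcal F$ the function $\mu\mapsto\ln\int_\Omega e^{\phi(\omega)}p_\mu(\omega)P(d\omega)$ is well defined (finite) and concave on $\mathcal M$. Let $X\subset\mathbb R^n$ be a nonempty convex compact set, $x\mapsto A(x)$ an affine map $\mathbb R^n\to\mathbb R^m$ with $A(X)\subset\mathcal M$, and $g\in\mathbb R^n$.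 An observation $\omega$ has density $p_{A(x)}$ w.r.t. $P$ for an unknown $x\in X$; the goal is to estimate $g^Tx$. An estimate is a Borel function $\hat g:\Omega\to\mathbb R$; it is called affine if $\hat g\in\mathcal F$. For $\varepsilon\in(0,1)$ the $\varepsilon$-risk of $\hat g$ is $\mathrm{Risk}(\hat g;\varepsilon)=\inf\{\delta:\ \sup_{x\in X}\mathrm{Prob}_{\omega\sim p_{A(x)}}\{|\hat g(\omega)-g^Tx|>\delta\}<\varepsilon\}$; $\mathrm{RiskA}(\varepsilon)=\inf_{\phi\in\mathcal F}\mathrm{Risk}(\phi;\varepsilon)$. For $r\ge0$, $x,y\in X$, $\phi\in\mathcal F$, $\alpha>0$ define $$\Phi_r(x,y;\phi,\alpha)=g^Tx-g^Ty+\alpha\ln\int_\Omega e^{\phi(\omega)/\alpha}p_{A(y)}(\omega)P(d\omega)+\alpha\ln\int_\Omega e^{-\phi(\omega)/\alpha}p_{A(x)}(\omega)P(d\omega)+2\alpha r,$$ and $\Phi_*(r)=\tfrac12\inf_{\phi\in\mathcal F,\alpha>0}\sup_{x,y\in X}\Phi_r(x,y;\phi,\alpha)$. *)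

theory Defs
  imports "HOL-Analysis.Analysis"
begin

definition fin_dim_borel_space :: "'w measure \<Rightarrow> ('w \<Rightarrow> real) set \<Rightarrow> bool" where
  "fin_dim_borel_space P F \<longleftrightarrow>
     (\<exists>(k::nat) (b::nat \<Rightarrow> 'w \<Rightarrow> real).
        (\<forall>i<k. b i \<in> borel_measurable P) \<and>
        F = {(\<lambda>\<omega>. \<Sum>i<k. c i * b i \<omega>) | c. True})"

definition contains_constants :: "('w \<Rightarrow> real) set \<Rightarrow> bool" where
  "contains_constants F \<longleftrightarrow> (\<forall>c::real. (\<lambda>_. c) \<in> F)"

definition density_family :: "'w measure \<Rightarrow> 'm set \<Rightarrow> ('m \<Rightarrow> 'w \<Rightarrow> real) \<Rightarrow> bool" where
  "density_family P M p \<longleftrightarrow>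
     (\<forall>\<mu>\<in>M. p \<mu> \<in> borel_measurable P \<and> (\<forall>\<omega>\<in>space P. p \<mu> \<omega> \<ge> 0) \<and>
            (\<integral>\<^sup>+\<omega>. ennreal (p \<mu> \<omega>) \<partial>P) = 1)"

text \<open>The pair (D, F) is good.  Finiteness of the integral of exp(phi) * p mu
  (for a nonnegative Borel integrand) is expressed as Lebesgue integrability.\<close>
definition good_pair :: "'w measure \<Rightarrow> ('m::euclidean_space) set \<Rightarrow> ('m \<Rightarrow> 'w \<Rightarrow> real)
    \<Rightarrow> ('w \<Rightarrow> real) set \<Rightarrow> bool" where
  "good_pair P M p F \<longleftrightarrow>
     open M \<and> convex M \<and>
     (\<forall>\<mu>\<in>M. \<forall>\<omega>\<in>space P. p \<mu> \<omega> > 0) \<and>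
     (\<forall>\<mu>\<in>M. \<forall>\<nu>\<in>M. (\<lambda>\<omega>. ln (p \<mu> \<omega> / p \<nu> \<omega>)) \<in> F) \<and>
     (\<forall>\<phi>\<in>F. (\<forall>\<mu>\<in>M. integrable P (\<lambda>\<omega>. exp (\<phi> \<omega>) * p \<mu> \<omega>)) \<and>
              concave_on M (\<lambda>\<mu>. ln (\<integral>\<omega>. exp (\<phi> \<omega>) * p \<mu> \<omega> \<partial>P)))"

definition affine_map :: "('a::real_vector \<Rightarrow> 'b::real_vector) \<Rightarrow> bool" where
  "affine_map A \<longleftrightarrow> (\<exists>L b. linear L \<and> (\<forall>x. A x = L x + b))"

definition dev_prob :: "'w measure \<Rightarrow> ('m \<Rightarrow> 'w \<Rightarrow> real) \<Rightarrow> ('n \<Rightarrow> 'm) \<Rightarrow> ('n::real_inner)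
    \<Rightarrow> ('w \<Rightarrow> real) \<Rightarrow> 'n \<Rightarrow> real \<Rightarrow> real" where
  "dev_prob P p A g gh x \<delta> =
     measure (density P (\<lambda>\<omega>. ennreal (p (A x) \<omega>))) {\<omega>\<in>space P. \<bar>gh \<omega> - g \<bullet> x\<bar> > \<delta>}"

text \<open>epsilon-risk (with value +infinity if no delta qualifies).\<close>
definition Risk :: "'w measure \<Rightarrow> ('m \<Rightarrow> 'w \<Rightarrow> real) \<Rightarrow> ('n \<Rightarrow> 'm) \<Rightarrow> 'n set \<Rightarrow> ('n::real_inner)
    \<Rightarrow> ('w \<Rightarrow> real) \<Rightarrow> real \<Rightarrow> ereal" where
  "Risk P p A X g gh \<epsilon> =
     Inf {ereal \<delta> | \<delta>. (SUP x\<in>X. dev_prob P p A g gh x \<delta>) < \<epsilon>}"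

definition RiskA :: "'w measure \<Rightarrow> ('m \<Rightarrow> 'w \<Rightarrow> real) \<Rightarrow> ('n \<Rightarrow> 'm) \<Rightarrow> 'n set \<Rightarrow> ('n::real_inner)
    \<Rightarrow> ('w \<Rightarrow> real) set \<Rightarrow> real \<Rightarrow> ereal" where
  "RiskA P p A X g F \<epsilon> = Inf {Risk P p A X g \<phi> \<epsilon> | \<phi>. \<phi> \<in> F}"

definition Phi_r :: "'w measure \<Rightarrow> ('m \<Rightarrow> 'w \<Rightarrow> real) \<Rightarrow> ('n \<Rightarrow> 'm) \<Rightarrow> ('n::real_inner)
    \<Rightarrow> real \<Rightarrow> 'n \<Rightarrow> 'n \<Rightarrow> ('w \<Rightarrow> real) \<Rightarrow> real \<Rightarrow> real" where
  "Phi_r P p A g r x y \<phi> \<alpha> =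
     g \<bullet> x - g \<bullet> y
     + \<alpha> * ln (\<integral>\<omega>. exp (\<phi> \<omega> / \<alpha>) * p (A y) \<omega> \<partial>P)
     + \<alpha> * ln (\<integral>\<omega>. exp (- \<phi> \<omega> / \<alpha>) * p (A x) \<omega> \<partial>P)
     + 2 * \<alpha> * r"

definition Phi_star :: "'w measure \<Rightarrow> ('m \<Rightarrow> 'w \<Rightarrow> real) \<Rightarrow> ('n \<Rightarrow> 'm) \<Rightarrow> 'n set \<Rightarrow> ('n::real_inner)
    \<Rightarrow> ('w \<Rightarrow> real) set \<Rightarrow> real \<Rightarrow> ereal" where
  "Phi_star P p A X g F r =
     ereal (1/2) * Inf {(SUP xy\<in>X \<times> X. ereal (Phi_r P p A g r (fst xy) (snd xy) \<phi> \<alpha>))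
                         | \<phi> \<alpha>. \<phi> \<in> F \<and> \<alpha> > 0}"

end

theory Submission
  imports Defs "HOL-Probability.Probability_Measure"
begin

text \<open>
  Fix \<open>\<phi> \<in> F\<close>, \<open>\<alpha> > 0\<close> and a real
  \<open>T\<close> bounding \<open>Phi_r\<close> with \<open>r = ln (2 / \<epsilon>)\<close> on \<open>X \<times> X\<close>.  The function \<open>Phi_r\<close> splits
  as \<open>a x + b y\<close>, so some shift \<open>c\<close> gives \<open>a x \<le> T/2 + c\<close> and \<open>b y \<le> T/2 - c\<close>.
  The exponential Markov inequality for \<open>\<phi>/\<alpha>\<close> and \<open>-\<phi>/\<alpha>\<close> then bounds each tail of
  \<open>\<phi> + c - g \<bullet> x\<close> beyond \<open>T/2 + \<eta>\<close> by \<open>(\<epsilon>/2) exp (-\<eta>/\<alpha>)\<close>, hence the affine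
  estimate \<open>\<phi> + c\<close> has \<open>\<epsilon>\<close>-risk at most \<open>T/2 + \<eta>\<close>.  Taking the infimum over
  \<open>(\<phi>, \<alpha>)\<close> in the extended reals, using that every risk is nonnegative, yields both
  claims.
\<close>

lemma fin_dim_borel_space_measurable:
  assumes "fin_dim_borel_space P F" and "\<psi> \<in> F"
  shows "\<psi> \<in> borel_measurable P"
proof -
  obtain k :: nat and b :: "nat \<Rightarrow> _ \<Rightarrow> real" where b: "\<forall>i<k. b i \<in> borel_measurable P"
    and F: "F = {(\<lambda>\<omega>. \<Sum>i<k. c i * b i \<omega>) | c. True}"
    using assms(1) unfolding fin_dim_borel_space_def by blast
  obtain c where "\<psi> = (\<lambda>\<omega>. \<Sum>i<k. c i * b i \<omega>)" using assms(2) unfolding F by blast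
  moreover have "(\<lambda>\<omega>. \<Sum>i<k. c i * b i \<omega>) \<in> borel_measurable P"
    using b by (intro borel_measurable_sum borel_measurable_times) auto
  ultimately show ?thesis by simp
qed

lemma fin_dim_borel_space_scale:
  assumes "fin_dim_borel_space P F" and "\<psi> \<in> F"
  shows "(\<lambda>\<omega>. u * \<psi> \<omega>) \<in> F"
proof -
  obtain k :: nat and b :: "nat \<Rightarrow> _ \<Rightarrow> real" where F: "F = {(\<lambda>\<omega>. \<Sum>i<k. c i * b i \<omega>) | c. True}"
    using assms(1) unfolding fin_dim_borel_space_def by blast
  obtain c where "\<psi> = (\<lambda>\<omega>. \<Sum>i<k. c i * b i \<omega>)" using assms(2) unfolding F by blast
  then have "(\<lambda>\<omega>. u * \<psi> \<omega>) = (\<lambda>\<omega>. \<Sum>i<k. (u * c i) * b i \<omega>)"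
    by (simp add: sum_distrib_left mult.assoc)
  then show ?thesis unfolding F by (intro CollectI exI[of _ "\<lambda>i. u * c i"]) simp
qed

lemma fin_dim_borel_space_add:
  assumes "fin_dim_borel_space P F" and "\<psi>\<^sub>1 \<in> F" and "\<psi>\<^sub>2 \<in> F"
  shows "(\<lambda>\<omega>. \<psi>\<^sub>1 \<omega> + \<psi>\<^sub>2 \<omega>) \<in> F"
proof -
  obtain k :: nat and b :: "nat \<Rightarrow> _ \<Rightarrow> real" where F: "F = {(\<lambda>\<omega>. \<Sum>i<k. c i * b i \<omega>) | c. True}"
    using assms(1) unfolding fin_dim_borel_space_def by blast
  obtain c\<^sub>1 c\<^sub>2 where "\<psi>\<^sub>1 = (\<lambda>\<omega>. \<Sum>i<k. c\<^sub>1 i * b i \<omega>)" and "\<psi>\<^sub>2 = (\<lambda>\<omega>. \<Sum>i<k. c\<^sub>2 i * b i \<omega>)"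
    using assms(2,3) unfolding F by blast
  then have "(\<lambda>\<omega>. \<psi>\<^sub>1 \<omega> + \<psi>\<^sub>2 \<omega>) = (\<lambda>\<omega>. \<Sum>i<k. (c\<^sub>1 i + c\<^sub>2 i) * b i \<omega>)"
    by (simp add: sum.distrib distrib_right)
  then show ?thesis unfolding F by (intro CollectI exI[of _ "\<lambda>i. c\<^sub>1 i + c\<^sub>2 i"]) simp
qed

lemma density_prob_space:
  assumes "q \<in> borel_measurable P" and "(\<integral>\<^sup>+\<omega>. ennreal (q \<omega>) \<partial>P) = 1"
  shows "prob_space (density P (\<lambda>\<omega>. ennreal (q \<omega>)))"
proof (rule prob_spaceI)
  have "emeasure (density P (\<lambda>\<omega>. ennreal (q \<omega>))) (space P) = (\<integral>\<^sup>+\<omega>. ennreal (q \<omega>) \<partial>P)"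
    using assms(1) by (auto simp: emeasure_density intro!: nn_integral_cong)
  then show "emeasure (density P (\<lambda>\<omega>. ennreal (q \<omega>))) (space (density P (\<lambda>\<omega>. ennreal (q \<omega>)))) = 1"
    using assms(2) by simp
qed

lemma exponential_markov:
  assumes f: "f \<in> borel_measurable P" and q: "q \<in> borel_measurable P"
    and q_nonneg: "\<forall>\<omega>\<in>space P. 0 \<le> q \<omega>"
    and int: "integrable P (\<lambda>\<omega>. exp (f \<omega>) * q \<omega>)"
  shows "emeasure (density P (\<lambda>\<omega>. ennreal (q \<omega>))) {\<omega>\<in>space P. s < f \<omega>}
         \<le> ennreal (exp (- s) * (\<integral>\<omega>. exp (f \<omega>) * q \<omega> \<partial>P))"
proof -
  let ?E = "{\<omega>\<in>space P. s < f \<omega>}"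
  have E: "?E \<in> sets P" using f by measurable
  have "emeasure (density P (\<lambda>\<omega>. ennreal (q \<omega>))) ?E = (\<integral>\<^sup>+\<omega>. ennreal (q \<omega>) * indicator ?E \<omega> \<partial>P)"
    using q E by (simp add: emeasure_density)
  also have "\<dots> \<le> (\<integral>\<^sup>+\<omega>. ennreal (exp (- s) * (exp (f \<omega>) * q \<omega>)) \<partial>P)"
  proof (rule nn_integral_mono)
    fix \<omega> assume \<omega>: "\<omega> \<in> space P"
    have "q \<omega> \<le> exp (f \<omega> - s) * q \<omega>" if "s < f \<omega>"
      using that q_nonneg \<omega> by (intro mult_le_cancel_right1[THEN iffD2]) auto
    then show "ennreal (q \<omega>) * indicator ?E \<omega> \<le> ennreal (exp (- s) * (exp (f \<omega>) * q \<omega>))"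
      using \<omega> by (auto simp: indicator_def exp_diff exp_minus field_simps intro!: ennreal_leI)
  qed
  also have "\<dots> = ennreal (\<integral>\<omega>. exp (- s) * (exp (f \<omega>) * q \<omega>) \<partial>P)"
    using int q_nonneg by (intro nn_integral_eq_integral) auto
  finally show ?thesis by simp
qed

lemma chernoff_tail:
  assumes \<phi>: "\<phi> \<in> borel_measurable P" and q: "q \<in> borel_measurable P"
    and q_nonneg: "\<forall>\<omega>\<in>space P. 0 \<le> q \<omega>"
    and int: "integrable P (\<lambda>\<omega>. exp (\<phi> \<omega> / \<alpha>) * q \<omega>)"
    and \<alpha>: "0 < \<alpha>"
    and bound: "\<alpha> * ln (\<integral>\<omega>. exp (\<phi> \<omega> / \<alpha>) * q \<omega> \<partial>P) \<le> s - \<alpha> * \<rho>"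
  shows "emeasure (density P (\<lambda>\<omega>. ennreal (q \<omega>))) {\<omega>\<in>space P. s < \<phi> \<omega>} \<le> ennreal (exp (- \<rho>))"
proof -
  let ?I = "\<integral>\<omega>. exp (\<phi> \<omega> / \<alpha>) * q \<omega> \<partial>P"
  have I_nonneg: "0 \<le> ?I" using q_nonneg by (intro integral_nonneg_AE AE_I2) auto
  have "{\<omega>\<in>space P. s < \<phi> \<omega>} = {\<omega>\<in>space P. s / \<alpha> < \<phi> \<omega> / \<alpha>}"
    using \<alpha> by (auto simp: divide_less_cancel)
  then have "emeasure (density P (\<lambda>\<omega>. ennreal (q \<omega>))) {\<omega>\<in>space P. s < \<phi> \<omega>}
      \<le> ennreal (exp (- (s / \<alpha>)) * ?I)"
    using exponential_markov[of "\<lambda>\<omega>. \<phi> \<omega> / \<alpha>" P q "s / \<alpha>"] \<phi> q q_nonneg int by simp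
  also have "exp (- (s / \<alpha>)) * ?I \<le> exp (- (s / \<alpha>)) * exp (ln ?I)"
    using I_nonneg by (cases "?I = 0") auto
  also have "\<dots> = exp ((\<alpha> * ln ?I - s) / \<alpha>)"
    using \<alpha> by (simp add: exp_add[symmetric] field_simps)
  also have "\<dots> \<le> exp (- \<rho>)"
    using bound \<alpha> by (simp add: divide_le_eq algebra_simps)
  finally show ?thesis by (simp add: ennreal_leI)
qed

lemma two_sided_chernoff:
  assumes \<phi>: "\<phi> \<in> borel_measurable P" and q: "q \<in> borel_measurable P"
    and q_nonneg: "\<forall>\<omega>\<in>space P. 0 \<le> q \<omega>"
    and int_pos: "integrable P (\<lambda>\<omega>. exp (\<phi> \<omega> / \<alpha>) * q \<omega>)"
    and int_neg: "integrable P (\<lambda>\<omega>. exp (- \<phi> \<omega> / \<alpha>) * q \<omega>)"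
    and \<alpha>: "0 < \<alpha>"
    and upper: "\<alpha> * ln (\<integral>\<omega>. exp (\<phi> \<omega> / \<alpha>) * q \<omega> \<partial>P) \<le> m + t - \<alpha> * \<rho>"
    and lower: "\<alpha> * ln (\<integral>\<omega>. exp (- \<phi> \<omega> / \<alpha>) * q \<omega> \<partial>P) \<le> t - m - \<alpha> * \<rho>"
  shows "measure (density P (\<lambda>\<omega>. ennreal (q \<omega>))) {\<omega>\<in>space P. t < \<bar>\<phi> \<omega> - m\<bar>} \<le> 2 * exp (- \<rho>)"
proof -
  let ?Q = "density P (\<lambda>\<omega>. ennreal (q \<omega>))"
  let ?upper = "{\<omega>\<in>space P. m + t < \<phi> \<omega>}" and ?lower = "{\<omega>\<in>space P. t - m < - \<phi> \<omega>}"
  have "{\<omega>\<in>space P. t < \<bar>\<phi> \<omega> - m\<bar>} = ?upper \<union> ?lower" by auto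
  moreover have "?upper \<in> sets ?Q" "?lower \<in> sets ?Q" using \<phi> by measurable
  ultimately have "emeasure ?Q {\<omega>\<in>space P. t < \<bar>\<phi> \<omega> - m\<bar>} \<le> emeasure ?Q ?upper + emeasure ?Q ?lower"
    by (simp add: emeasure_subadditive)
  also have "\<dots> \<le> ennreal (exp (- \<rho>)) + ennreal (exp (- \<rho>))"
    using chernoff_tail[OF \<phi> q q_nonneg int_pos \<alpha> upper]
      chernoff_tail[of "\<lambda>\<omega>. - \<phi> \<omega>", OF _ q q_nonneg int_neg \<alpha> lower] \<phi>
    by (intro add_mono) auto
  also have "\<dots> = ennreal (2 * exp (- \<rho>))" by (simp flip: ennreal_plus)
  finally show ?thesis unfolding measure_def by (intro enn2real_leI) auto
qed

text \<open>If \<open>a x + b y \<le> T\<close> on \<open>X \<times> X\<close>, the bound can be shared by a common shift \<open>c\<close>: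
  this shift is the additive constant of the affine estimate.\<close>

lemma separable_bound_split:
  fixes a b :: "'a \<Rightarrow> real"
  assumes "X \<noteq> {}" and sum_le: "\<And>x y. x \<in> X \<Longrightarrow> y \<in> X \<Longrightarrow> a x + b y \<le> T"
  shows "\<exists>c. \<forall>x\<in>X. a x \<le> T / 2 + c \<and> b x \<le> T / 2 - c"
proof -
  obtain x\<^sub>0 where x\<^sub>0: "x\<^sub>0 \<in> X" using assms(1) by blast
  have bdd_a: "bdd_above (a ` X)"
    using sum_le x\<^sub>0 by (intro bdd_aboveI[of _ "T - b x\<^sub>0"]) (force simp: algebra_simps)
  have bdd_b: "bdd_above (b ` X)"
    using sum_le x\<^sub>0 by (intro bdd_aboveI[of _ "T - a x\<^sub>0"]) (force simp: algebra_simps)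
  define a\<^sub>s b\<^sub>s where "a\<^sub>s = Sup (a ` X)" and "b\<^sub>s = Sup (b ` X)"
  have "a\<^sub>s \<le> T - b y" if "y \<in> X" for y
    unfolding a\<^sub>s_def using assms(1) sum_le[OF _ that] by (intro cSUP_least) (auto simp: algebra_simps)
  then have sup_sum: "b\<^sub>s \<le> T - a\<^sub>s"
    unfolding b\<^sub>s_def using assms(1) by (intro cSUP_least) (auto simp: algebra_simps)
  have le_sup: "a x \<le> a\<^sub>s" "b x \<le> b\<^sub>s" if "x \<in> X" for x
    unfolding a\<^sub>s_def b\<^sub>s_def using bdd_a bdd_b that by (auto intro: cSUP_upper)
  have "\<forall>x\<in>X. a x \<le> T / 2 + (a\<^sub>s - b\<^sub>s) / 2 \<and> b x \<le> T / 2 - (a\<^sub>s - b\<^sub>s) / 2"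
  proof
    fix x assume "x \<in> X"
    show "a x \<le> T / 2 + (a\<^sub>s - b\<^sub>s) / 2 \<and> b x \<le> T / 2 - (a\<^sub>s - b\<^sub>s) / 2"
      using sup_sum le_sup[OF \<open>x \<in> X\<close>] by (auto simp: field_simps)
  qed
  then show ?thesis by blast
qed

lemma Risk_le:
  assumes "X \<noteq> {}" and dev_le: "\<And>x. x \<in> X \<Longrightarrow> dev_prob P p A g gh x \<delta> \<le> \<beta>" and "\<beta> < \<epsilon>"
  shows "Risk P p A X g gh \<epsilon> \<le> ereal \<delta>"
proof -
  have "(SUP x\<in>X. dev_prob P p A g gh x \<delta>) \<le> \<beta>"
    using assms(1) dev_le by (intro cSUP_least) auto
  then have "(SUP x\<in>X. dev_prob P p A g gh x \<delta>) < \<epsilon>" using assms(3) by linarith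
  then show ?thesis unfolding Risk_def by (intro Inf_lower) blast
qed

text \<open>Every \<open>\<epsilon>\<close>-risk with \<open>\<epsilon> \<le> 1\<close> is nonnegative: at a negative level the deviation
  event is the whole space.\<close>

lemma Risk_nonneg:
  assumes "X \<noteq> {}" and "\<epsilon> \<le> 1"
    and prob: "\<And>x. x \<in> X \<Longrightarrow> prob_space (density P (\<lambda>\<omega>. ennreal (p (A x) \<omega>)))"
  shows "0 \<le> Risk P p A X g gh \<epsilon>"
  unfolding Risk_def
proof (rule Inf_greatest, safe)
  fix \<delta> assume small: "(SUP x\<in>X. dev_prob P p A g gh x \<delta>) < \<epsilon>"
  show "0 \<le> ereal \<delta>"
  proof (rule ccontr)
    assume "\<not> 0 \<le> ereal \<delta>"
    then have neg: "\<delta> < 0" by simp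
    obtain x\<^sub>0 where x\<^sub>0: "x\<^sub>0 \<in> X" using assms(1) by blast
    have "bdd_above ((\<lambda>x. dev_prob P p A g gh x \<delta>) ` X)"
      using prob by (intro bdd_aboveI[of _ 1]) (auto simp: dev_prob_def intro: prob_space.prob_le_1)
    then have "dev_prob P p A g gh x\<^sub>0 \<delta> \<le> (SUP x\<in>X. dev_prob P p A g gh x \<delta>)"
      using x\<^sub>0 by (intro cSUP_upper)
    moreover have "dev_prob P p A g gh x\<^sub>0 \<delta> = 1"
    proof -
      have "{\<omega>\<in>space P. \<bar>gh \<omega> - g \<bullet> x\<^sub>0\<bar> > \<delta>} = space (density P (\<lambda>\<omega>. ennreal (p (A x\<^sub>0) \<omega>)))"
        using neg by auto
      then show ?thesis
        unfolding dev_prob_def using prob_space.prob_space[OF prob[OF x\<^sub>0]] by simp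
    qed
    ultimately show False using small \<open>\<epsilon> \<le> 1\<close> by linarith
  qed
qed

lemma shifted_estimate_risk:
  fixes g :: "'n::real_inner"
  assumes X_ne: "X \<noteq> {}" and \<phi>: "\<phi> \<in> borel_measurable P"
    and p_meas: "\<And>x. x \<in> X \<Longrightarrow> p (A x) \<in> borel_measurable P"
    and p_nonneg: "\<And>x. x \<in> X \<Longrightarrow> \<forall>\<omega>\<in>space P. 0 \<le> p (A x) \<omega>"
    and int_pos: "\<And>x. x \<in> X \<Longrightarrow> integrable P (\<lambda>\<omega>. exp (\<phi> \<omega> / \<alpha>) * p (A x) \<omega>)"
    and int_neg: "\<And>x. x \<in> X \<Longrightarrow> integrable P (\<lambda>\<omega>. exp (- \<phi> \<omega> / \<alpha>) * p (A x) \<omega>)"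
    and \<alpha>: "0 < \<alpha>" and \<epsilon>: "0 < \<epsilon>" and \<eta>: "0 < \<eta>"
    and Phi_le: "\<And>x y. x \<in> X \<Longrightarrow> y \<in> X \<Longrightarrow> Phi_r P p A g (ln (2 / \<epsilon>)) x y \<phi> \<alpha> \<le> T"
  shows "\<exists>c. Risk P p A X g (\<lambda>\<omega>. \<phi> \<omega> + c) \<epsilon> \<le> ereal (T / 2 + \<eta>)"
proof -
  define r where "r = ln (2 / \<epsilon>)"
  define mgf_up where "mgf_up x = (\<integral>\<omega>. exp (\<phi> \<omega> / \<alpha>) * p (A x) \<omega> \<partial>P)" for x
  define mgf_low where "mgf_low x = (\<integral>\<omega>. exp (- \<phi> \<omega> / \<alpha>) * p (A x) \<omega> \<partial>P)" for x
  have "(g \<bullet> x + \<alpha> * ln (mgf_low x) + \<alpha> * r) + (- (g \<bullet> y) + \<alpha> * ln (mgf_up y) + \<alpha> * r) \<le> T"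
    if "x \<in> X" "y \<in> X" for x y
    using Phi_le[OF that] unfolding Phi_r_def mgf_up_def mgf_low_def r_def by (simp add: algebra_simps)
  then obtain c where c: "\<And>x. x \<in> X \<Longrightarrow>
      g \<bullet> x + \<alpha> * ln (mgf_low x) + \<alpha> * r \<le> T / 2 + c \<and> - (g \<bullet> x) + \<alpha> * ln (mgf_up x) + \<alpha> * r \<le> T / 2 - c"
    using separable_bound_split[OF X_ne, of "\<lambda>x. g \<bullet> x + \<alpha> * ln (mgf_low x) + \<alpha> * r"
        "\<lambda>y. - (g \<bullet> y) + \<alpha> * ln (mgf_up y) + \<alpha> * r"] by blast
  have \<alpha>_shift: "\<alpha> * (r + \<eta> / \<alpha>) = \<alpha> * r + \<eta>" using \<alpha> by (simp add: field_simps)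
  have "dev_prob P p A g (\<lambda>\<omega>. \<phi> \<omega> + c) x (T / 2 + \<eta>) \<le> 2 * exp (- (r + \<eta> / \<alpha>))" if x: "x \<in> X" for x
  proof -
    have "{\<omega>\<in>space P. \<bar>\<phi> \<omega> + c - g \<bullet> x\<bar> > T / 2 + \<eta>}
        = {\<omega>\<in>space P. T / 2 + \<eta> < \<bar>\<phi> \<omega> - (g \<bullet> x - c)\<bar>}"
      by (auto simp: algebra_simps)
    moreover have "\<alpha> * ln (mgf_up x) \<le> (g \<bullet> x - c) + (T / 2 + \<eta>) - \<alpha> * (r + \<eta> / \<alpha>)"
      and "\<alpha> * ln (mgf_low x) \<le> (T / 2 + \<eta>) - (g \<bullet> x - c) - \<alpha> * (r + \<eta> / \<alpha>)"
      using c[OF x] unfolding \<alpha>_shift by linarith+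
    then have "measure (density P (\<lambda>\<omega>. ennreal (p (A x) \<omega>)))
        {\<omega>\<in>space P. T / 2 + \<eta> < \<bar>\<phi> \<omega> - (g \<bullet> x - c)\<bar>} \<le> 2 * exp (- (r + \<eta> / \<alpha>))"
      unfolding mgf_up_def mgf_low_def
      by (intro two_sided_chernoff[OF \<phi> p_meas[OF x] p_nonneg[OF x] int_pos[OF x] int_neg[OF x] \<alpha>])
    ultimately show ?thesis unfolding dev_prob_def by simp
  qed
  moreover have "2 * exp (- (r + \<eta> / \<alpha>)) < \<epsilon>"
  proof -
    have "exp (- r) = \<epsilon> / 2" unfolding r_def using \<epsilon> by (simp add: exp_minus)
    then have "2 * exp (- (r + \<eta> / \<alpha>)) = \<epsilon> * exp (- (\<eta> / \<alpha>))"
      by (simp add: exp_diff exp_minus field_simps)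
    also have "\<dots> < \<epsilon>" using \<epsilon> \<alpha> \<eta> by simp
    finally show ?thesis .
  qed
  ultimately show ?thesis using Risk_le[OF X_ne] by blast
qed

lemma half_Inf_approx:
  fixes S :: "ereal set" and R :: "'a \<Rightarrow> ereal"
  assumes "Z \<noteq> {}" and R_nonneg: "\<And>z. z \<in> Z \<Longrightarrow> 0 \<le> R z"
    and achieve: "\<And>s T \<eta>. s \<in> S \<Longrightarrow> s \<le> ereal T \<Longrightarrow> 0 < \<eta> \<Longrightarrow> \<exists>z\<in>Z. R z \<le> ereal (T / 2 + \<eta>)"
    and "0 < \<delta>"
  shows "\<exists>z\<in>Z. R z \<le> ereal (1 / 2) * Inf S + ereal \<delta>"
proof (cases "Inf S = \<infinity>")
  case True
  then show ?thesis using \<open>Z \<noteq> {}\<close> by auto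
next
  case False
  have "0 \<le> s" if s: "s \<in> S" for s
  proof (rule ccontr)
    assume "\<not> 0 \<le> s"
    then have "s < ereal 0" by (simp add: zero_ereal_def)
    then obtain T where "s < ereal T" "ereal T < ereal 0" using ereal_dense2 by blast
    then have T: "s < ereal T" "T < 0" by simp_all
    have "\<exists>z\<in>Z. R z \<le> ereal (T / 2 + - T / 4)"
      by (rule achieve[OF s less_imp_le[OF T(1)]]) (use T(2) in simp)
    then obtain z where "z \<in> Z" "R z \<le> ereal (T / 2 + - T / 4)" by blast
    moreover have "ereal (T / 2 + - T / 4) < 0" using \<open>T < 0\<close> by simp
    ultimately show False using R_nonneg[of z] by (meson order.trans not_le)
  qed
  then have "0 \<le> Inf S" by (rule Inf_greatest)
  with False obtain s\<^sub>0 where s\<^sub>0: "Inf S = ereal s\<^sub>0" by (cases "Inf S") simp_all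
  then have "Inf S < ereal (s\<^sub>0 + \<delta>)" using \<open>0 < \<delta>\<close> by simp
  then obtain s where s: "s \<in> S" "s < ereal (s\<^sub>0 + \<delta>)" by (auto simp: Inf_less_iff)
  have "\<exists>z\<in>Z. R z \<le> ereal ((s\<^sub>0 + \<delta>) / 2 + \<delta> / 2)"
    by (rule achieve[OF s(1) less_imp_le[OF s(2)]]) (use \<open>0 < \<delta>\<close> in simp)
  then obtain z where "z \<in> Z" "R z \<le> ereal ((s\<^sub>0 + \<delta>) / 2 + \<delta> / 2)" by blast
  moreover have "ereal ((s\<^sub>0 + \<delta>) / 2 + \<delta> / 2) = ereal (1 / 2) * Inf S + ereal \<delta>"
    unfolding s\<^sub>0 by (simp add: field_simps)
  ultimately show ?thesis by auto
qed

lemma good_pair_shifted_estimate_risk: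
  fixes g :: "'n::real_inner"
  assumes D: "density_family P M p" and F_space: "fin_dim_borel_space P F"
    and good: "good_pair P M p F" and X_ne: "X \<noteq> {}" and A_X: "A ` X \<subseteq> M"
    and \<phi>: "\<phi> \<in> F" and \<alpha>: "0 < \<alpha>" and \<epsilon>: "0 < \<epsilon>" and \<eta>: "0 < \<eta>"
    and Phi_le: "\<And>x y. x \<in> X \<Longrightarrow> y \<in> X \<Longrightarrow> Phi_r P p A g (ln (2 / \<epsilon>)) x y \<phi> \<alpha> \<le> T"
  shows "\<exists>c. Risk P p A X g (\<lambda>\<omega>. \<phi> \<omega> + c) \<epsilon> \<le> ereal (T / 2 + \<eta>)"
proof -
  have AX: "A x \<in> M" if "x \<in> X" for x using A_X that by blast
  have integrable_scaled: "integrable P (\<lambda>\<omega>. exp (u * \<phi> \<omega>) * p (A x) \<omega>)" if "x \<in> X" for u x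
    using good fin_dim_borel_space_scale[OF F_space \<phi>] AX[OF that] unfolding good_pair_def by simp
  have "integrable P (\<lambda>\<omega>. exp (\<phi> \<omega> / \<alpha>) * p (A x) \<omega>)"
    and "integrable P (\<lambda>\<omega>. exp (- \<phi> \<omega> / \<alpha>) * p (A x) \<omega>)" if "x \<in> X" for x
    using integrable_scaled[OF that, of "1 / \<alpha>"] integrable_scaled[OF that, of "- 1 / \<alpha>"] by simp_all
  moreover have "p (A x) \<in> borel_measurable P" and "\<forall>\<omega>\<in>space P. 0 \<le> p (A x) \<omega>" if "x \<in> X" for x
    using D AX[OF that] unfolding density_family_def by simp_all
  ultimately show ?thesis
    using fin_dim_borel_space_measurable[OF F_space \<phi>] \<alpha> \<epsilon> \<eta> Phi_le
    by (intro shifted_estimate_risk[OF X_ne]) simp_all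
qed

lemma RiskA_le_approx:
  assumes shift: "\<And>\<phi> c. \<phi> \<in> F \<Longrightarrow> (\<lambda>\<omega>. \<phi> \<omega> + c) \<in> F"
    and approx: "\<And>\<delta>. 0 < \<delta> \<Longrightarrow> \<exists>\<phi>\<in>F. \<exists>c. Risk P p A X g (\<lambda>\<omega>. \<phi> \<omega> + c) \<epsilon> \<le> B + ereal \<delta>"
  shows "RiskA P p A X g F \<epsilon> \<le> B"
proof (rule ereal_le_epsilon2)
  fix \<delta> :: real assume "0 < \<delta>"
  then obtain \<phi> c where "\<phi> \<in> F" and "Risk P p A X g (\<lambda>\<omega>. \<phi> \<omega> + c) \<epsilon> \<le> B + ereal \<delta>"
    using approx by blast
  moreover have "RiskA P p A X g F \<epsilon> \<le> Risk P p A X g (\<lambda>\<omega>. \<phi> \<omega> + c) \<epsilon>"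
    unfolding RiskA_def using shift[OF \<open>\<phi> \<in> F\<close>] by (intro Inf_lower) blast
  ultimately show "RiskA P p A X g F \<epsilon> \<le> B + ereal \<delta>" by simp
qed

theorem lemma3p1:
  fixes P :: "'w::polish_space measure"
    and M :: "(real^'m) set"
    and p :: "real^'m \<Rightarrow> 'w \<Rightarrow> real"
    and F :: "('w \<Rightarrow> real) set"
    and X :: "(real^'n) set"
    and A :: "real^'n \<Rightarrow> real^'m"
    and g :: "real^'n"
    and \<epsilon> :: real
  assumes P_borel: "sets P = sets borel"
    and P_sigma_finite: "sigma_finite_measure P"
    and D: "density_family P M p"
    and F_space: "fin_dim_borel_space P F"
    and F_const: "contains_constants F"
    and good: "good_pair P M p F"
    and X_ne: "X \<noteq> {}" and X_convex: "convex X" and X_compact: "compact X"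
    and A_affine: "affine_map A" and A_X: "A ` X \<subseteq> M"
    and eps: "0 < \<epsilon>" "\<epsilon> < 1"
  shows "RiskA P p A X g F \<epsilon> \<le> Phi_star P p A X g F (ln (2 / \<epsilon>)) \<and>
         (\<forall>\<delta>>0. \<exists>\<phi>\<in>F. \<exists>c::real.
            Risk P p A X g (\<lambda>\<omega>. \<phi> \<omega> + c) \<epsilon> \<le> Phi_star P p A X g F (ln (2 / \<epsilon>)) + ereal \<delta>)"
proof -
  let ?r = "ln (2 / \<epsilon>)"
  define S where "S = {(SUP xy\<in>X \<times> X. ereal (Phi_r P p A g ?r (fst xy) (snd xy) \<phi> \<alpha>)) | \<phi> \<alpha>. \<phi> \<in> F \<and> \<alpha> > 0}"
  have Phi_star_eq: "Phi_star P p A X g F ?r = ereal (1 / 2) * Inf S"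
    unfolding Phi_star_def S_def ..
  have achieve: "\<exists>z\<in>F \<times> UNIV. Risk P p A X g (\<lambda>\<omega>. fst z \<omega> + snd z) \<epsilon> \<le> ereal (T / 2 + \<eta>)"
    if s_in: "s \<in> S" and s_le: "s \<le> ereal T" and \<eta>: "0 < \<eta>" for s T \<eta>
  proof -
    obtain \<phi> \<alpha> where \<phi>: "\<phi> \<in> F" and \<alpha>: "0 < \<alpha>"
      and s: "s = (SUP xy\<in>X \<times> X. ereal (Phi_r P p A g ?r (fst xy) (snd xy) \<phi> \<alpha>))"
      using s_in unfolding S_def by blast
    have "Phi_r P p A g ?r x y \<phi> \<alpha> \<le> T" if "x \<in> X" "y \<in> X" for x y
    proof -
      have "ereal (Phi_r P p A g ?r x y \<phi> \<alpha>) \<le> s"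
        unfolding s using that by (intro SUP_upper2[of "(x, y)"]) auto
      from order_trans[OF this s_le] show ?thesis by simp
    qed
    then obtain c where "Risk P p A X g (\<lambda>\<omega>. \<phi> \<omega> + c) \<epsilon> \<le> ereal (T / 2 + \<eta>)"
      using good_pair_shifted_estimate_risk[OF D F_space good X_ne A_X \<phi> \<alpha> eps(1) \<eta>] by blast
    then show ?thesis using \<phi> by (intro bexI[of _ "(\<phi>, c)"]) auto
  qed
  have "prob_space (density P (\<lambda>\<omega>. ennreal (p (A x) \<omega>)))" if "x \<in> X" for x
    using D A_X that unfolding density_family_def by (auto intro: density_prob_space)
  then have risk_nonneg: "0 \<le> Risk P p A X g \<psi> \<epsilon>" for \<psi>
    using X_ne eps(2) by (intro Risk_nonneg) simp_all
  have Z_ne: "F \<times> (UNIV :: real set) \<noteq> {}" using F_const unfolding contains_constants_def by blast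
  have approx: "\<exists>\<phi>\<in>F. \<exists>c. Risk P p A X g (\<lambda>\<omega>. \<phi> \<omega> + c) \<epsilon> \<le> Phi_star P p A X g F ?r + ereal \<delta>"
    if \<delta>: "0 < \<delta>" for \<delta>
  proof -
    have "\<exists>z\<in>F \<times> UNIV. Risk P p A X g (\<lambda>\<omega>. fst z \<omega> + snd z) \<epsilon> \<le> ereal (1 / 2) * Inf S + ereal \<delta>"
      by (rule half_Inf_approx[OF Z_ne _ achieve \<delta>]) (rule risk_nonneg)
    then show ?thesis unfolding Phi_star_eq by force
  qed
  moreover have "RiskA P p A X g F \<epsilon> \<le> Phi_star P p A X g F ?r"
    using fin_dim_borel_space_add[OF F_space] F_const approx
    unfolding contains_constants_def by (intro RiskA_le_approx) blast+
  ultimately show ?thesis by blast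
qed

end
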